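(* Let $X_0=\{n^2:n\in\mathbb{N}\}$ with the metric $d(x,y)=|x-y|$. If $\varphi$ is a state on $\ell_\infty(X_0)$ such that $\varphi$ vanishes on $c_0(X_0)$, then $\varphi\circ E$ is a $(\sigma_h,\beta)$-KMS state on $\mathrm{C}^*_u(X_0)$ for every map $h\colon X_0\to\mathbb{R}$ and every $\beta\in\mathbb{R}$, where $E\colon\mathrm{C}^*_u(X_0)\to\ell_\infty(X_0)$ is the canonical conditional expectation.
   Context: $\mathrm{C}^*_u(X_0)$ is the norm closure of the $^*$-algebra of operators $a$ on $\ell_2(X_0)$ with $\sup\{d(x,y):a_{x,y}\neq0\}<\infty$, $a_{x,y}=\langle a\delta_y,\delta_x\rangle$. $\ell_\infty(X_0)$ is identified with the diagonal operators and $c_0(X_0)$ with the compact diagonal operators; $E$ keeps only the diagonal entries. (Every map $h\colon X_0\to\mathbb{R}$ is coarse.) $\sigma_{h,t}(a)=e^{it\bar h}ae^{-it\bar h}$, $e^{it\bar h}\delta_x=e^{ith(x)}\delta_x$. A state $\varphi$ is $(\sigma_h,\beta)$-KMS if $\varphi(a\sigma_{h,i\beta}(b))=\varphi(ba)$ for all $a$ and all analytic $b$ (those for which $t\mapsto\sigma_{h,t}(b)$ extends to an entire function). *)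

theory Defs
  imports "HOL-Analysis.Analysis"
begin

(* X_0 = {n^2 : n in N}; the point n^2 is indexed by n :: nat.
   Operators on l2(X_0) are represented by their matrices a x y = <a delta_y, delta_x>. *)

type_synonym mat = "nat \<Rightarrow> nat \<Rightarrow> complex"

definition dX0 :: "nat \<Rightarrow> nat \<Rightarrow> real" where
  "dX0 m n = \<bar>real (m^2) - real (n^2)\<bar>"

(* the matrix a defines a bounded operator on l2 with norm at most C *)
definition bounded_by :: "mat \<Rightarrow> real \<Rightarrow> bool" where
  "bounded_by a C \<longleftrightarrow> 0 \<le> C \<and>
     (\<forall>F G. finite F \<longrightarrow> finite G \<longrightarrow> (\<forall>v::nat \<Rightarrow> complex.
        (\<Sum>x\<in>G. (cmod (\<Sum>y\<in>F. a x y * v y))^2) \<le> C^2 * (\<Sum>y\<in>F. (cmod (v y))^2)))"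

definition bdd_op :: "mat \<Rightarrow> bool" where
  "bdd_op a \<longleftrightarrow> (\<exists>C. bounded_by a C)"

definition opnorm :: "mat \<Rightarrow> real" where
  "opnorm a = Inf {C. bounded_by a C}"

definition madd :: "mat \<Rightarrow> mat \<Rightarrow> mat" where
  "madd a b = (\<lambda>x y. a x y + b x y)"

definition mdiff :: "mat \<Rightarrow> mat \<Rightarrow> mat" where
  "mdiff a b = (\<lambda>x y. a x y - b x y)"

definition mscale :: "complex \<Rightarrow> mat \<Rightarrow> mat" where
  "mscale c a = (\<lambda>x y. c * a x y)"

definition mmul :: "mat \<Rightarrow> mat \<Rightarrow> mat" where
  "mmul a b = (\<lambda>x z. \<Sum>\<^sub>\<infinity>y. a x y * b y z)"

definition madj :: "mat \<Rightarrow> mat" where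
  "madj a = (\<lambda>x y. cnj (a y x))"

definition mone :: mat where
  "mone = (\<lambda>x y. if x = y then 1 else 0)"

definition finite_prop :: "mat \<Rightarrow> bool" where
  "finite_prop a \<longleftrightarrow> (\<exists>R. \<forall>x y. a x y \<noteq> 0 \<longrightarrow> dX0 x y \<le> R)"

(* uniform Roe algebra: norm closure of the bounded finite-propagation operators *)
definition Cu :: "mat set" where
  "Cu = {a. bdd_op a \<and> (\<forall>e>0. \<exists>b. bdd_op b \<and> finite_prop b \<and> opnorm (mdiff a b) < e)}"

definition linf :: "(nat \<Rightarrow> complex) set" where
  "linf = {f. bounded (range f)}"

definition c0 :: "(nat \<Rightarrow> complex) set" where
  "c0 = {f. f \<longlonglongrightarrow> 0}"

definition linf_state :: "((nat \<Rightarrow> complex) \<Rightarrow> complex) \<Rightarrow> bool" where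
  "linf_state \<phi> \<longleftrightarrow>
     (\<forall>f\<in>linf. \<forall>g\<in>linf. \<phi> (\<lambda>n. f n + g n) = \<phi> f + \<phi> g) \<and>
     (\<forall>c. \<forall>f\<in>linf. \<phi> (\<lambda>n. c * f n) = c * \<phi> f) \<and>
     (\<forall>f\<in>linf. Im (\<phi> (\<lambda>n. cnj (f n) * f n)) = 0 \<and> Re (\<phi> (\<lambda>n. cnj (f n) * f n)) \<ge> 0) \<and>
     \<phi> (\<lambda>n. 1) = 1"

definition condexp :: "mat \<Rightarrow> (nat \<Rightarrow> complex)" where
  "condexp a = (\<lambda>n. a n n)"

definition Cu_state :: "(mat \<Rightarrow> complex) \<Rightarrow> bool" where
  "Cu_state \<psi> \<longleftrightarrow>
     (\<forall>a\<in>Cu. \<forall>b\<in>Cu. \<psi> (madd a b) = \<psi> a + \<psi> b) \<and>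
     (\<forall>c. \<forall>a\<in>Cu. \<psi> (mscale c a) = c * \<psi> a) \<and>
     (\<forall>a\<in>Cu. Im (\<psi> (mmul (madj a) a)) = 0 \<and> Re (\<psi> (mmul (madj a) a)) \<ge> 0) \<and>
     \<psi> mone = 1"

(* sigma_{h,t}(a) = e^{it h} a e^{-it h}, t real *)
definition sigma :: "(nat \<Rightarrow> real) \<Rightarrow> real \<Rightarrow> mat \<Rightarrow> mat" where
  "sigma h t a = (\<lambda>x y. exp (\<i> * of_real t * of_real (h x)) * a x y * exp (- \<i> * of_real t * of_real (h y)))"

(* F is an entire (norm-holomorphic, C*_u-valued) extension of t \<mapsto> sigma_{h,t}(b) *)
definition entire_ext :: "(nat \<Rightarrow> real) \<Rightarrow> mat \<Rightarrow> (complex \<Rightarrow> mat) \<Rightarrow> bool" where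
  "entire_ext h b F \<longleftrightarrow>
     (\<forall>t::real. F (of_real t) = sigma h t b) \<and> (\<forall>z. F z \<in> Cu) \<and>
     (\<forall>z. \<exists>D. bdd_op D \<and>
        ((\<lambda>w. opnorm (mdiff (mscale (1 / w) (mdiff (F (z + w)) (F z))) D)) \<longlongrightarrow> 0) (at 0))"

(* (sigma_h, beta)-KMS state on C*_u(X_0); sigma_{h,i beta}(b) = F(i beta) *)
definition KMS_state :: "(nat \<Rightarrow> real) \<Rightarrow> real \<Rightarrow> (mat \<Rightarrow> complex) \<Rightarrow> bool" where
  "KMS_state h \<beta> \<psi> \<longleftrightarrow> Cu_state \<psi> \<and>
     (\<forall>a\<in>Cu. \<forall>b\<in>Cu. \<forall>F. entire_ext h b F \<longrightarrow>
        \<psi> (mmul a (F (\<i> * of_real \<beta>))) = \<psi> (mmul b a))"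

end

theory Submission
  imports Defs "HOL-Complex_Analysis.Complex_Analysis"
begin

(* Since |m^2 - n^2| >= m + n for m \<noteq> n, an operator of finite propagation on X_0 is diagonal
   outside a finite block; hence for a \<in> C*_u(X_0) the off-diagonal parts of the n-th row and
   column have l2-mass tending to 0, and (ac)_{nn} - a_{nn} c_{nn} is in c_0. So a state \<phi>
   vanishing on c_0 satisfies \<phi>(E(ac)) = \<phi>(n \<mapsto> a_{nn} c_{nn}), which is symmetric in a and c.
   The KMS condition then reduces to E(\<sigma>_{i\<beta>}(b)) = E(b): the diagonal entries of \<sigma>_t(b) do
   not depend on t, so by analytic continuation neither do those of its entire extension. *)

lemma bounded_byD:
  assumes "bounded_by a C" "finite F" "finite G"
  shows "(\<Sum>x\<in>G. (cmod (\<Sum>y\<in>F. a x y * v y))^2) \<le> C^2 * (\<Sum>y\<in>F. (cmod (v y))^2)"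
  using assms unfolding bounded_by_def by blast

lemma bounded_by_nonneg: "bounded_by a C \<Longrightarrow> 0 \<le> C"
  unfolding bounded_by_def by blast

lemma bounded_by_column_sum:
  assumes "bounded_by a C" "finite G"
  shows "(\<Sum>x\<in>G. (cmod (a x n))^2) \<le> C^2"
  using bounded_byD[OF assms(1) _ assms(2), of "{n}" "\<lambda>_. 1"] by simp

lemma bounded_by_entry:
  assumes "bounded_by a C"
  shows "cmod (a x y) \<le> C"
proof -
  have "(cmod (a x y))^2 \<le> C^2"
    using bounded_by_column_sum[OF assms, of "{x}" y] by simp
  then show ?thesis
    using bounded_by_nonneg[OF assms] power2_le_imp_le by blast
qed

lemma bounded_by_row_sum:
  assumes "bounded_by a C" "finite F"
  shows "(\<Sum>y\<in>F. (cmod (a n y))^2) \<le> C^2"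
proof -
  define S where "S = (\<Sum>y\<in>F. (cmod (a n y))^2)"
  have S_nonneg: "0 \<le> S" unfolding S_def by (simp add: sum_nonneg)
  have row_dot: "(\<Sum>y\<in>F. a n y * cnj (a n y)) = of_real S"
    unfolding S_def of_real_sum by (rule sum.cong[OF refl]) (metis complex_norm_square)
  \<comment> \<open>test the operator against the conjugate of its own n-th row\<close>
  have "(cmod (\<Sum>y\<in>F. a n y * cnj (a n y)))^2 \<le> C^2 * S"
    using bounded_byD[OF assms(1) assms(2), of "{n}" "\<lambda>y. cnj (a n y)"] by (simp add: S_def)
  then have "S * S \<le> C^2 * S"
    using S_nonneg by (simp add: row_dot power2_eq_square)
  then have "S \<le> C^2"
    using S_nonneg by (cases "S = 0") auto
  then show ?thesis unfolding S_def .
qed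

lemma bounded_by_mdiff:
  assumes "bounded_by a A" "bounded_by b B"
  shows "bounded_by (mdiff a b) (sqrt (2*A^2 + 2*B^2))"
  unfolding bounded_by_def
proof (intro conjI allI impI)
  show "0 \<le> sqrt (2*A^2 + 2*B^2)" by simp
  fix F G :: "nat set" and v :: "nat \<Rightarrow> complex"
  assume F: "finite F" and G: "finite G"
  define V where "V = (\<Sum>y\<in>F. (cmod (v y))^2)"
  define p where "p x = (\<Sum>y\<in>F. a x y * v y)" for x
  define q where "q x = (\<Sum>y\<in>F. b x y * v y)" for x
  have p_le: "(\<Sum>x\<in>G. (cmod (p x))^2) \<le> A^2 * V"
    using bounded_byD[OF assms(1) F G] unfolding p_def V_def .
  have q_le: "(\<Sum>x\<in>G. (cmod (q x))^2) \<le> B^2 * V"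
    using bounded_byD[OF assms(2) F G] unfolding q_def V_def .
  have mdiff_apply: "(\<Sum>y\<in>F. mdiff a b x y * v y) = p x - q x" for x
    unfolding p_def q_def mdiff_def by (simp add: sum_subtractf algebra_simps)
  have pointwise: "(cmod (p x - q x))^2 \<le> 2 * (cmod (p x))^2 + 2 * (cmod (q x))^2" for x
  proof -
    have "(cmod (p x - q x))^2 \<le> (cmod (p x) + cmod (q x))^2"
      by (simp add: power_mono norm_triangle_ineq4)
    also have "\<dots> \<le> 2 * (cmod (p x))^2 + 2 * (cmod (q x))^2"
      using zero_le_power2[of "cmod (p x) - cmod (q x)"] unfolding power2_sum power2_diff by linarith
    finally show ?thesis .
  qed
  have "(\<Sum>x\<in>G. (cmod (\<Sum>y\<in>F. mdiff a b x y * v y))^2)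
        \<le> 2 * (\<Sum>x\<in>G. (cmod (p x))^2) + 2 * (\<Sum>x\<in>G. (cmod (q x))^2)"
    unfolding mdiff_apply sum_distrib_left sum.distrib[symmetric] by (rule sum_mono) (rule pointwise)
  also have "\<dots> \<le> (sqrt (2*A^2 + 2*B^2))^2 * V"
    using p_le q_le by (simp add: algebra_simps)
  finally show "(\<Sum>x\<in>G. (cmod (\<Sum>y\<in>F. mdiff a b x y * v y))^2)
      \<le> (sqrt (2*A^2 + 2*B^2))^2 * (\<Sum>y\<in>F. (cmod (v y))^2)"
    unfolding V_def .
qed

lemma bounded_by_mscale:
  assumes "bounded_by a A"
  shows "bounded_by (mscale c a) (cmod c * A)"
  unfolding bounded_by_def
proof (intro conjI allI impI)
  show "0 \<le> cmod c * A" using bounded_by_nonneg[OF assms] by simp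
  fix F G :: "nat set" and v :: "nat \<Rightarrow> complex"
  assume F: "finite F" and G: "finite G"
  have "(\<Sum>x\<in>G. (cmod (\<Sum>y\<in>F. mscale c a x y * v y))^2)
        = (cmod c)^2 * (\<Sum>x\<in>G. (cmod (\<Sum>y\<in>F. a x y * v y))^2)"
    unfolding mscale_def sum_distrib_left
    by (rule sum.cong[OF refl]) (simp add: sum_distrib_left[symmetric] mult.assoc norm_mult power_mult_distrib)
  also have "\<dots> \<le> (cmod c)^2 * (A^2 * (\<Sum>y\<in>F. (cmod (v y))^2))"
    using bounded_byD[OF assms F G] by (simp add: mult_left_mono)
  finally show "(\<Sum>x\<in>G. (cmod (\<Sum>y\<in>F. mscale c a x y * v y))^2)
      \<le> (cmod c * A)^2 * (\<Sum>y\<in>F. (cmod (v y))^2)"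
    by (simp add: power_mult_distrib mult.assoc)
qed

lemma bdd_op_mdiff: "bdd_op a \<Longrightarrow> bdd_op b \<Longrightarrow> bdd_op (mdiff a b)"
  unfolding bdd_op_def using bounded_by_mdiff by blast

lemma bdd_op_mscale: "bdd_op a \<Longrightarrow> bdd_op (mscale c a)"
  unfolding bdd_op_def using bounded_by_mscale by blast

lemma entry_le_opnorm:
  assumes "bdd_op a"
  shows "cmod (a x y) \<le> opnorm a"
  using assms unfolding opnorm_def bdd_op_def
  by (intro cInf_greatest) (auto intro: bounded_by_entry)

lemma opnorm_lessE:
  assumes "bdd_op a" "opnorm a < e"
  obtains C where "bounded_by a C" "C < e"
  using assms cInf_lessD[of "{C. bounded_by a C}" e] unfolding opnorm_def bdd_op_def by auto

lemma Cu_bdd_op: "a \<in> Cu \<Longrightarrow> bdd_op a"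
  unfolding Cu_def by blast

lemma dX0_ge_add:
  assumes "m \<noteq> n"
  shows "real m + real n \<le> dX0 m n"
proof -
  have "1 \<le> \<bar>real m - real n\<bar>"
    using assms by (cases "m < n") auto
  then have "1 * (real m + real n) \<le> \<bar>real m - real n\<bar> * (real m + real n)"
    by (rule mult_right_mono) simp
  also have "\<dots> = dX0 m n"
  proof -
    have "real (m^2) - real (n^2) = (real m - real n) * (real m + real n)"
      by (simp add: power2_eq_square algebra_simps)
    then show ?thesis unfolding dX0_def by (simp add: abs_mult)
  qed
  finally show ?thesis by simp
qed

lemma finite_prop_eventually_diagonal:
  assumes "finite_prop b"
  obtains N where "\<And>x y. x \<noteq> y \<Longrightarrow> N \<le> x \<or> N \<le> y \<Longrightarrow> b x y = 0"
proof -
  obtain R where R: "\<And>x y. b x y \<noteq> 0 \<Longrightarrow> dX0 x y \<le> R"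
    using assms unfolding finite_prop_def by blast
  show thesis
  proof
    fix x y assume "x \<noteq> y" "nat \<lceil>R\<rceil> + 1 \<le> x \<or> nat \<lceil>R\<rceil> + 1 \<le> y"
    then have "R < dX0 x y"
      using dX0_ge_add[of x y] by linarith
    then show "b x y = 0"
      using R by force
  qed
qed

lemma Cu_offdiagonal_small:
  assumes "a \<in> Cu" "e > 0"
  obtains N where
    "\<And>n F. N \<le> n \<Longrightarrow> finite F \<Longrightarrow> n \<notin> F \<Longrightarrow> (\<Sum>y\<in>F. (cmod (a n y))^2) \<le> e"
    "\<And>n F. N \<le> n \<Longrightarrow> finite F \<Longrightarrow> n \<notin> F \<Longrightarrow> (\<Sum>y\<in>F. (cmod (a y n))^2) \<le> e"
proof -
  obtain b where b: "bdd_op b" "finite_prop b" "opnorm (mdiff a b) < sqrt e"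
    using assms real_sqrt_gt_zero[OF assms(2)] unfolding Cu_def by blast
  obtain C where C: "bounded_by (mdiff a b) C" "C < sqrt e"
    using opnorm_lessE[OF bdd_op_mdiff[OF Cu_bdd_op[OF assms(1)] b(1)] b(3)] .
  have "C^2 \<le> e"
    using C bounded_by_nonneg[OF C(1)] assms(2)
    by (metis less_eq_real_def power_mono real_sqrt_pow2)
  obtain N where N: "\<And>x y. x \<noteq> y \<Longrightarrow> N \<le> x \<or> N \<le> y \<Longrightarrow> b x y = 0"
    using finite_prop_eventually_diagonal[OF b(2)] by blast
  show thesis
  proof
    fix n F assume "N \<le> n" "finite F" "n \<notin> F"
    then have "b n y = 0" "b y n = 0" if "y \<in> F" for y
      using N[of n y] N[of y n] that \<open>N \<le> n\<close> \<open>n \<notin> F\<close> by auto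
    then have "(\<Sum>y\<in>F. (cmod (a n y))^2) = (\<Sum>y\<in>F. (cmod (mdiff a b n y))^2)"
      "(\<Sum>y\<in>F. (cmod (a y n))^2) = (\<Sum>y\<in>F. (cmod (mdiff a b y n))^2)"
      by (auto simp: mdiff_def intro!: sum.cong)
    then show "(\<Sum>y\<in>F. (cmod (a n y))^2) \<le> e" "(\<Sum>y\<in>F. (cmod (a y n))^2) \<le> e"
      using bounded_by_row_sum[OF C(1) \<open>finite F\<close>, of n]
        bounded_by_column_sum[OF C(1) \<open>finite F\<close>, of n]
        \<open>C^2 \<le> e\<close> by linarith+
  qed
qed

lemma norm_infsum_mult_le:
  fixes p q :: "'a \<Rightarrow> 'b :: {banach, real_normed_div_algebra}"
  assumes p_le: "\<And>F. finite F \<Longrightarrow> F \<subseteq> A \<Longrightarrow> (\<Sum>y\<in>F. (norm (p y))^2) \<le> K"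
    and q_le: "\<And>F. finite F \<Longrightarrow> F \<subseteq> A \<Longrightarrow> (\<Sum>y\<in>F. (norm (q y))^2) \<le> K"
  shows "(\<lambda>y. p y * q y) summable_on A" "norm (infsum (\<lambda>y. p y * q y) A) \<le> K"
proof -
  have finite_sums: "(\<Sum>y\<in>F. norm (p y * q y)) \<le> K" if "finite F" "F \<subseteq> A" for F
  proof -
    have "norm (p y * q y) \<le> ((norm (p y))^2 + (norm (q y))^2) / 2" for y
      using zero_le_power2[of "norm (p y) - norm (q y)"]
      unfolding norm_mult power2_diff by (simp add: field_simps)
    then have "(\<Sum>y\<in>F. norm (p y * q y)) \<le> (\<Sum>y\<in>F. ((norm (p y))^2 + (norm (q y))^2) / 2)"
      by (rule sum_mono)
    also have "\<dots> = ((\<Sum>y\<in>F. (norm (p y))^2) + (\<Sum>y\<in>F. (norm (q y))^2)) / 2"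
      by (simp only: sum_divide_distrib[symmetric] sum.distrib)
    also have "\<dots> \<le> K"
      using p_le[OF that] q_le[OF that] by simp
    finally show ?thesis .
  qed
  have abs_summable: "(\<lambda>y. norm (p y * q y)) summable_on A"
    by (rule nonneg_bdd_above_summable_on) (auto intro!: bdd_aboveI2 finite_sums)
  then show "(\<lambda>y. p y * q y) summable_on A"
    by (rule abs_summable_summable)
  have "norm (infsum (\<lambda>y. p y * q y) A) \<le> infsum (\<lambda>y. norm (p y * q y)) A"
    by (rule norm_infsum_bound[OF abs_summable])
  also have "\<dots> \<le> K"
    by (rule infsum_le_finite_sums[OF abs_summable finite_sums])
  finally show "norm (infsum (\<lambda>y. p y * q y) A) \<le> K" .
qed

lemma Cu_diag_mmul_minus_c0:
  assumes a: "a \<in> Cu" and c: "c \<in> Cu"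
  shows "(\<lambda>n. mmul a c n n - a n n * c n n) \<in> c0"
  unfolding c0_def mem_Collect_eq
proof (rule LIMSEQ_I)
  fix r :: real assume "0 < r"
  then have "0 < r / 2" by simp
  obtain Na where Na: "\<And>n F. Na \<le> n \<Longrightarrow> finite F \<Longrightarrow> n \<notin> F \<Longrightarrow> (\<Sum>y\<in>F. (cmod (a n y))^2) \<le> r/2"
    using Cu_offdiagonal_small[OF a \<open>0 < r / 2\<close>] by metis
  obtain Nc where Nc: "\<And>n F. Nc \<le> n \<Longrightarrow> finite F \<Longrightarrow> n \<notin> F \<Longrightarrow> (\<Sum>y\<in>F. (cmod (c y n))^2) \<le> r/2"
    using Cu_offdiagonal_small[OF c \<open>0 < r / 2\<close>] by metis
  have "norm (mmul a c n n - a n n * c n n - 0) < r" if n: "max Na Nc \<le> n" for n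
  proof -
    note offdiag = norm_infsum_mult_le[of "- {n}" "\<lambda>y. a n y" "r/2" "\<lambda>y. c y n"]
    have "(\<Sum>y\<in>F. (cmod (a n y))^2) \<le> r/2" "(\<Sum>y\<in>F. (cmod (c y n))^2) \<le> r/2"
      if "finite F" "F \<subseteq> - {n}" for F
      using Na[of n F] Nc[of n F] n that by auto
    then have offdiag_summable: "(\<lambda>y. a n y * c y n) summable_on - {n}"
      and offdiag_le: "norm (infsum (\<lambda>y. a n y * c y n) (- {n})) \<le> r/2"
      using offdiag by simp_all
    have "insert n (- {n}) = UNIV" by blast
    then have "mmul a c n n = infsum (\<lambda>y. a n y * c y n) (insert n (- {n}))"
      unfolding mmul_def by simp
    also have "\<dots> = a n n * c n n + infsum (\<lambda>y. a n y * c y n) (- {n})"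
      using infsum_insert[OF offdiag_summable, of n] by simp
    finally show ?thesis
      using offdiag_le \<open>0 < r\<close> by simp
  qed
  then show "\<exists>N. \<forall>n\<ge>N. norm (mmul a c n n - a n n * c n n - 0) < r" by blast
qed

lemma linfI: "(\<And>n. norm (f n) \<le> B) \<Longrightarrow> f \<in> linf"
  unfolding linf_def bounded_iff by auto

lemma linfE:
  assumes "f \<in> linf"
  obtains B where "\<And>n. norm (f n) \<le> B"
  using assms unfolding linf_def bounded_iff by auto

lemma c0_subset_linf: "c0 \<subseteq> linf"
  unfolding c0_def linf_def using convergent_imp_bounded by blast

lemma linf_mult: "f \<in> linf \<Longrightarrow> g \<in> linf \<Longrightarrow> (\<lambda>n. f n * g n) \<in> linf"
proof -
  assume "f \<in> linf" "g \<in> linf"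
  then obtain A B where A: "\<And>n. norm (f n) \<le> A" and B: "\<And>n. norm (g n) \<le> B"
    by (meson linfE)
  have "norm (f n * g n) \<le> A * B" for n
    unfolding norm_mult by (rule mult_mono[OF A B]) (auto intro: order_trans[OF norm_ge_zero A])
  then show ?thesis by (rule linfI)
qed

lemma condexp_linf: "a \<in> Cu \<Longrightarrow> condexp a \<in> linf"
proof -
  assume "a \<in> Cu"
  then obtain C where "bounded_by a C"
    using Cu_bdd_op bdd_op_def by blast
  then show ?thesis
    unfolding condexp_def by (intro linfI[of _ C]) (rule bounded_by_entry)
qed

lemma linf_state_add:
  "linf_state \<phi> \<Longrightarrow> f \<in> linf \<Longrightarrow> g \<in> linf \<Longrightarrow> \<phi> (\<lambda>n. f n + g n) = \<phi> f + \<phi> g"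
  unfolding linf_state_def by blast

lemma linf_state_eq_mod_c0:
  assumes "linf_state \<phi>" "\<forall>f\<in>c0. \<phi> f = 0"
    and "g \<in> linf" "(\<lambda>n. f n - g n) \<in> c0"
  shows "\<phi> f = \<phi> g"
proof -
  have "\<phi> f = \<phi> (\<lambda>n. g n + (f n - g n))" by simp
  also have "\<dots> = \<phi> g + \<phi> (\<lambda>n. f n - g n)"
    using linf_state_add[OF assms(1,3), of "\<lambda>n. f n - g n"] assms(4) c0_subset_linf by blast
  also have "\<dots> = \<phi> g" using assms by simp
  finally show ?thesis .
qed

lemma state_condexp_mmul:
  assumes "linf_state \<phi>" "\<forall>f\<in>c0. \<phi> f = 0" "a \<in> Cu" "c \<in> Cu"
  shows "\<phi> (condexp (mmul a c)) = \<phi> (\<lambda>n. a n n * c n n)"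
proof (rule linf_state_eq_mod_c0[OF assms(1,2)])
  show "(\<lambda>n. a n n * c n n) \<in> linf"
    using linf_mult[OF condexp_linf condexp_linf, OF assms(3,4)] unfolding condexp_def .
  show "(\<lambda>n. condexp (mmul a c) n - a n n * c n n) \<in> c0"
    using Cu_diag_mmul_minus_c0[OF assms(3,4)] unfolding condexp_def .
qed

lemma condexp_madj_mmul:
  assumes "a \<in> Cu"
  obtains f where "f \<in> linf" "condexp (mmul (madj a) a) = (\<lambda>n. cnj (f n) * f n)"
proof -
  obtain C where C: "bounded_by a C"
    using Cu_bdd_op[OF assms] bdd_op_def by blast
  define r where "r n y = (cmod (a y n))^2" for n y
  have r_sums: "sum (r n) F \<le> C^2" if "finite F" for n F
    unfolding r_def by (rule bounded_by_column_sum[OF C that])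
  have r_summable: "r n summable_on UNIV" for n
    by (rule nonneg_bdd_above_summable_on) (auto simp: r_def intro!: bdd_aboveI2 bounded_by_column_sum[OF C])
  define S where "S n = infsum (r n) UNIV" for n
  have S_nonneg: "0 \<le> S n" for n
    unfolding S_def by (rule infsum_nonneg) (simp add: r_def)
  have S_le: "S n \<le> C^2" for n
    unfolding S_def by (rule infsum_le_finite_sums[OF r_summable r_sums])
  have condexp_eq: "condexp (mmul (madj a) a) n = of_real (S n)" for n
  proof -
    have "condexp (mmul (madj a) a) n = infsum (\<lambda>y. complex_of_real (r n y)) UNIV"
      unfolding condexp_def mmul_def madj_def r_def
      by (rule infsum_cong) (metis complex_norm_square mult.commute)
    also have "\<dots> = of_real (S n)"
      unfolding S_def by (intro infsumI has_sum_of_real has_sum_infsum r_summable)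
    finally show ?thesis .
  qed
  show thesis
  proof
    show "(\<lambda>n. complex_of_real (sqrt (S n))) \<in> linf"
    proof (rule linfI)
      show "norm (complex_of_real (sqrt (S n))) \<le> C" for n
        using S_le[of n] S_nonneg[of n] bounded_by_nonneg[OF C] real_sqrt_le_iff[of "S n" "C^2"]
        by simp
    qed
    show "condexp (mmul (madj a) a) = (\<lambda>n. cnj (of_real (sqrt (S n))) * of_real (sqrt (S n)))"
      using S_nonneg by (simp add: fun_eq_iff condexp_eq flip: of_real_mult)
  qed
qed

lemma Cu_state_condexp:
  assumes "linf_state \<phi>"
  shows "Cu_state (\<lambda>a. \<phi> (condexp a))"
  unfolding Cu_state_def
proof (intro conjI ballI allI)
  fix a b assume "a \<in> Cu" "b \<in> Cu"
  then show "\<phi> (condexp (madd a b)) = \<phi> (condexp a) + \<phi> (condexp b)"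
    using linf_state_add[OF assms condexp_linf condexp_linf]
    unfolding condexp_def madd_def by simp
next
  fix c a assume "a \<in> Cu"
  then show "\<phi> (condexp (mscale c a)) = c * \<phi> (condexp a)"
    using assms condexp_linf unfolding linf_state_def condexp_def mscale_def by simp
next
  fix a assume "a \<in> Cu"
  then obtain f where "f \<in> linf" "condexp (mmul (madj a) a) = (\<lambda>n. cnj (f n) * f n)"
    by (rule condexp_madj_mmul)
  then show "Im (\<phi> (condexp (mmul (madj a) a))) = 0"
    and "0 \<le> Re (\<phi> (condexp (mmul (madj a) a)))"
    using assms unfolding linf_state_def by simp_all
next
  show "\<phi> (condexp mone) = 1"
    using assms unfolding linf_state_def condexp_def mone_def by simp
qed

lemma sigma_diag: "sigma h t b n n = b n n"
proof -
  have "exp z * w * exp (- z) = w" for z w :: complex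
    by (simp add: exp_minus field_simps)
  then show ?thesis
    unfolding sigma_def by (metis mult_minus_left)
qed

lemma entire_ext_entry_holomorphic:
  assumes "entire_ext h b F"
  shows "(\<lambda>z. F z x y) holomorphic_on UNIV"
  unfolding holomorphic_on_def field_differentiable_def
proof (intro ballI)
  fix z :: complex
  have F_Cu: "F w \<in> Cu" for w
    using assms unfolding entire_ext_def by blast
  obtain D where D: "bdd_op D"
    "((\<lambda>w. opnorm (mdiff (mscale (1 / w) (mdiff (F (z + w)) (F z))) D)) \<longlongrightarrow> 0) (at 0)"
    using assms unfolding entire_ext_def by blast
  define M where "M w = mdiff (mscale (1 / w) (mdiff (F (z + w)) (F z))) D" for w
  have M_bdd: "bdd_op (M w)" for w
    unfolding M_def by (intro bdd_op_mdiff bdd_op_mscale D(1) Cu_bdd_op F_Cu)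
  have "((\<lambda>w. M w x y) \<longlongrightarrow> 0) (at 0)"
  proof (rule tendsto_0_le[where K = 1])
    show "((\<lambda>w. opnorm (M w)) \<longlongrightarrow> 0) (at 0)"
      using D(2) unfolding M_def .
    show "\<forall>\<^sub>F w in at 0. norm (M w x y) \<le> norm (opnorm (M w)) * 1"
      using entry_le_opnorm[OF M_bdd] by (intro always_eventually allI) (simp add: order_trans[OF _ abs_ge_self])
  qed
  moreover have "M w x y = (F (z + w) x y - F z x y) / w - D x y" for w
    unfolding M_def mdiff_def mscale_def by (simp add: divide_inverse mult.commute)
  ultimately have "((\<lambda>w. (F (z + w) x y - F z x y) / w) \<longlongrightarrow> D x y) (at 0)"
    by (simp add: Lim_null[where l = "D x y"])
  then show "\<exists>D'. ((\<lambda>z. F z x y) has_field_derivative D') (at z within UNIV)"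
    unfolding DERIV_def by blast
qed

lemma zero_islimpt_Reals: "0 islimpt (\<real> :: complex set)"
  unfolding islimpt_approachable
proof (intro allI impI)
  fix e :: real assume "0 < e"
  then show "\<exists>x\<in>(\<real> :: complex set). x \<noteq> 0 \<and> dist x 0 < e"
    by (intro bexI[where x = "complex_of_real (e / 2)"]) (auto simp: dist_norm)
qed

lemma entire_ext_diag:
  assumes "entire_ext h b F"
  shows "F w n n = b n n"
proof -
  have holo: "(\<lambda>z. F z n n - b n n) holomorphic_on UNIV"
    using entire_ext_entry_holomorphic[OF assms] by (rule holomorphic_on_diff[OF _ holomorphic_on_const])
  have real_zero:  "F z n n - b n n = 0" if "z \<in> \<real>" for z
  proof -
    obtain t where "z = of_real t"
      using \<open>z \<in> \<real>\<close> by (rule Reals_cases)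
    then have "F z = sigma h t b"
      using assms unfolding entire_ext_def by blast
    then show ?thesis
      by (simp add: sigma_diag)
  qed
  have "F w n n - b n n = 0"
    by (rule analytic_continuation[OF holo open_UNIV connected_UNIV subset_UNIV UNIV_I
          zero_islimpt_Reals real_zero UNIV_I])
  then show ?thesis by simp
qed

theorem proposition2p9:
  fixes \<phi> :: "(nat \<Rightarrow> complex) \<Rightarrow> complex"
  assumes "linf_state \<phi>"
    and "\<forall>f\<in>c0. \<phi> f = 0"
  shows "\<forall>(h :: nat \<Rightarrow> real) (\<beta> :: real). KMS_state h \<beta> (\<lambda>a. \<phi> (condexp a))"
proof (intro allI)
  fix h :: "nat \<Rightarrow> real" and \<beta> :: real
  have "\<phi> (condexp (mmul a (F (\<i> * of_real \<beta>)))) = \<phi> (condexp (mmul b a))"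
    if "a \<in> Cu" "b \<in> Cu" "entire_ext h b F" for a b F
  proof -
    have "F (\<i> * of_real \<beta>) \<in> Cu"
      using \<open>entire_ext h b F\<close> unfolding entire_ext_def by blast
    then have "\<phi> (condexp (mmul a (F (\<i> * of_real \<beta>))))
        = \<phi> (\<lambda>n. a n n * F (\<i> * of_real \<beta>) n n)"
      using state_condexp_mmul[OF assms \<open>a \<in> Cu\<close>] by blast
    also have "\<dots> = \<phi> (\<lambda>n. b n n * a n n)"
      using entire_ext_diag[OF \<open>entire_ext h b F\<close>] by (simp add: mult.commute)
    also have "\<dots> = \<phi> (condexp (mmul b a))"
      using state_condexp_mmul[OF assms \<open>b \<in> Cu\<close> \<open>a \<in> Cu\<close>] by simp
    finally show ?thesis .
  qed
  then show "KMS_state h \<beta> (\<lambda>a. \<phi> (condexp a))"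
    unfolding KMS_state_def using Cu_state_condexp[OF assms(1)] by blast
qed

end
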